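(* Let $G=\langle\omega,\xi\mid \xi^2=1,\ \omega^2=\xi\omega^5\xi\rangle$ and let $$D_{14}\times\mathbb{Z}/3=\langle a,b,\xi\mid \xi^2=1,\ a^3=1,\ b^7=1,\ \xi b\xi=b^6,\ [a,b]=[a,\xi]=1\rangle,$$ where $[x,y]=xyx^{-1}y^{-1}$. Then the assignment $\xi\mapsto\xi$, $\omega\mapsto ab$ defines an isomorphism $G\cong D_{14}\times\mathbb{Z}/3$. *)

theory Defs
  imports "HOL-Algebra.Group"
begin

text \<open>A word over generators of type 'g is a list of letters (g, e), where
  e = False means the generator g and e = True means its inverse.\<close>

type_synonym 'g word = "('g \<times> bool) list"

definition gen :: "'g \<Rightarrow> 'g word" where
  "gen g = [(g, False)]"

definition inv_word :: "'g word \<Rightarrow> 'g word" where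
  "inv_word w = rev (map (\<lambda>(g, e). (g, \<not> e)) w)"

definition pow_word :: "'g word \<Rightarrow> nat \<Rightarrow> 'g word" where
  "pow_word w n = concat (replicate n w)"

definition comm_word :: "'g word \<Rightarrow> 'g word \<Rightarrow> 'g word" where
  "comm_word x y = x @ y @ inv_word x @ inv_word y"

text \<open>A relation u = v is encoded by the relator u v^-1.\<close>
definition rel_word :: "'g word \<Rightarrow> 'g word \<Rightarrow> 'g word" where
  "rel_word u v = u @ inv_word v"

inductive_set pres_rel :: "'g word set \<Rightarrow> ('g word \<times> 'g word) set"
  for R :: "'g word set" where
  refl: "(w, w) \<in> pres_rel R"
| sym: "(u, v) \<in> pres_rel R \<Longrightarrow> (v, u) \<in> pres_rel R"
| trans: "(u, v) \<in> pres_rel R \<Longrightarrow> (v, w) \<in> pres_rel R \<Longrightarrow> (u, w) \<in> pres_rel R"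
| cancel: "(u @ [(g, e), (g, \<not> e)] @ v, u @ v) \<in> pres_rel R"
| relator: "r \<in> R \<Longrightarrow> (u @ r @ v, u @ v) \<in> pres_rel R"

definition presented_group :: "'g word set \<Rightarrow> 'g word set monoid" where
  "presented_group R =
     \<lparr> carrier = UNIV // pres_rel R,
       mult = (\<lambda>X Y. \<Union>x\<in>X. \<Union>y\<in>Y. pres_rel R `` {x @ y}),
       one = pres_rel R `` {[]} \<rparr>"

definition word_class :: "'g word set \<Rightarrow> 'g word \<Rightarrow> 'g word set" where
  "word_class R w = pres_rel R `` {w}"

datatype genG = Om | Xi
datatype genD = A | B | X

definition relG :: "genG word set" where
  "relG = { pow_word (gen Xi) 2,
            rel_word (pow_word (gen Om) 2) (gen Xi @ pow_word (gen Om) 5 @ gen Xi) }"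

definition relD :: "genD word set" where
  "relD = { pow_word (gen X) 2,
            pow_word (gen A) 3,
            pow_word (gen B) 7,
            rel_word (gen X @ gen B @ gen X) (pow_word (gen B) 6),
            comm_word (gen A) (gen B),
            comm_word (gen A) (gen X) }"

abbreviation G_grp :: "genG word set monoid" where
  "G_grp \<equiv> presented_group relG"

abbreviation D_grp :: "genD word set monoid" where
  "D_grp \<equiv> presented_group relD"

end

theory Submission
  imports Defs
begin

text \<open>
  Put \<open>v = \<xi>\<omega>\<xi>\<close>. Conjugating \<open>\<omega>\<^sup>2 = \<xi>\<omega>\<^sup>5\<xi>\<close> by \<open>\<xi>\<close> gives
  \<open>v\<^sup>2 = \<omega>\<^sup>5\<close>, and the relation itself says \<open>v\<^sup>5 = \<omega>\<^sup>2\<close>; hence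
  \<open>\<omega>\<^sup>2\<^sup>5 = v\<^sup>1\<^sup>0 = \<omega>\<^sup>4\<close>, so \<open>\<omega>\<^sup>2\<^sup>1 = 1\<close>. Consequently \<open>\<xi>\<close> commutes with
  \<open>\<omega>\<^sup>7\<close> (as \<open>\<xi>\<omega>\<^sup>7\<xi> = v\<^sup>7 = \<omega>\<^sup>7\<close>) and inverts \<open>\<omega>\<^sup>1\<^sup>5\<close>, so that
  \<open>a \<mapsto> \<omega>\<^sup>7, b \<mapsto> \<omega>\<^sup>1\<^sup>5, \<xi> \<mapsto> \<xi>\<close> respects the relations of
  \<open>D\<^sub>1\<^sub>4 \<times> \<int>/3\<close>. Conversely \<open>ab\<close> satisfies the relation of \<open>G\<close>, and
  \<open>(ab)\<^sup>7 = a\<close>, \<open>(ab)\<^sup>1\<^sup>5 = b\<close>, \<open>\<omega>\<^sup>7\<omega>\<^sup>1\<^sup>5 = \<omega>\<close>: the two induced homomorphisms are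
  inverse to each other on generators, hence everywhere.
\<close>

lemma pres_rel_context:
  "(u, v) \<in> pres_rel R \<Longrightarrow> (p @ u @ q, p @ v @ q) \<in> pres_rel R"
proof (induction rule: pres_rel.induct)
  case (refl w) then show ?case by (rule pres_rel.refl)
next
  case (sym u v) then show ?case using pres_rel.sym by blast
next
  case (trans u v w) then show ?case using pres_rel.trans by blast
next
  case (cancel u g e v)
  then show ?case using pres_rel.cancel[of "p @ u" g e "v @ q" R] by simp
next
  case (relator r u v)
  then show ?case using pres_rel.relator[of r R "p @ u" "v @ q"] by simp
qed

lemma pres_rel_append:
  "(u, u') \<in> pres_rel R \<Longrightarrow> (v, v') \<in> pres_rel R \<Longrightarrow> (u @ v, u' @ v') \<in> pres_rel R"
  using pres_rel_context[of u u' R "[]" v] pres_rel_context[of v v' R u' "[]"]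
  by (auto intro: pres_rel.trans)

lemma equiv_pres_rel: "equiv UNIV (pres_rel R)"
  unfolding equiv_def refl_on_def sym_def trans_def
  by (auto intro: pres_rel.refl pres_rel.sym pres_rel.trans)

lemma inv_word_Cons: "inv_word ((g, e) # w) = inv_word w @ [(g, \<not> e)]"
  by (simp add: inv_word_def)

lemma inv_word_append: "inv_word (u @ v) = inv_word v @ inv_word u"
  by (simp add: inv_word_def)

lemma inv_word_append_pres_rel: "(inv_word w @ w, []) \<in> pres_rel R"
proof (induction w)
  case Nil then show ?case by (simp add: inv_word_def pres_rel.refl)
next
  case (Cons a w)
  obtain g e where a: "a = (g, e)" by (cases a)
  have "(inv_word w @ [(g, \<not> e), (g, \<not> \<not> e)] @ w, inv_word w @ w) \<in> pres_rel R"
    by (rule pres_rel.cancel)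
  with Cons show ?case unfolding a inv_word_Cons by (auto intro: pres_rel.trans)
qed

lemma mem_word_class_iff: "v \<in> word_class R w \<longleftrightarrow> (w, v) \<in> pres_rel R"
  unfolding word_class_def by simp

lemma word_class_eqI: "(u, v) \<in> pres_rel R \<Longrightarrow> word_class R u = word_class R v"
  unfolding word_class_def using equiv_pres_rel by (rule equiv_class_eq)

lemma word_class_relator: "r \<in> R \<Longrightarrow> word_class R r = word_class R []"
  using word_class_eqI[OF pres_rel.relator[of r R "[]" "[]"]] by simp

lemma carrier_presented_group: "carrier (presented_group R) = range (word_class R)"
  unfolding presented_group_def word_class_def quotient_def by auto

lemma word_class_closed: "word_class R w \<in> carrier (presented_group R)"
  by (simp add: carrier_presented_group)

lemma one_presented_group: "\<one>\<^bsub>presented_group R\<^esub> = word_class R []"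
  unfolding presented_group_def word_class_def by simp

lemma mult_presented_group:
  "word_class R u \<otimes>\<^bsub>presented_group R\<^esub> word_class R v = word_class R (u @ v)"
proof -
  have "pres_rel R `` {u' @ v'} = word_class R (u @ v)"
    if "u' \<in> word_class R u" "v' \<in> word_class R v" for u' v'
  proof -
    have "word_class R (u @ v) = word_class R (u' @ v')"
      using that by (intro word_class_eqI pres_rel_append) (simp_all add: mem_word_class_iff)
    then show ?thesis by (simp add: word_class_def)
  qed
  moreover have "u \<in> word_class R u" "v \<in> word_class R v"
    by (simp_all add: mem_word_class_iff pres_rel.refl)
  ultimately show ?thesis unfolding presented_group_def by auto
qed

lemma group_presented_group: "group (presented_group R)"
proof (rule groupI)
  fix x assume "x \<in> carrier (presented_group R)"
  then obtain w where x: "x = word_class R w" by (auto simp: carrier_presented_group)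
  show "\<exists>y\<in>carrier (presented_group R). y \<otimes>\<^bsub>presented_group R\<^esub> x = \<one>\<^bsub>presented_group R\<^esub>"
    using word_class_eqI[OF inv_word_append_pres_rel]
    by (auto simp: x mult_presented_group one_presented_group carrier_presented_group)
qed (auto simp: carrier_presented_group mult_presented_group one_presented_group)

definition eval_word :: "('h, 'm) monoid_scheme \<Rightarrow> ('g \<Rightarrow> 'h) \<Rightarrow> 'g word \<Rightarrow> 'h" where
  "eval_word H f w =
     foldr (\<lambda>(g, e) acc. (if e then inv\<^bsub>H\<^esub> (f g) else f g) \<otimes>\<^bsub>H\<^esub> acc) w \<one>\<^bsub>H\<^esub>"

lemma eval_word_Nil [simp]: "eval_word H f [] = \<one>\<^bsub>H\<^esub>"
  by (simp add: eval_word_def)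

lemma eval_word_Cons:
  "eval_word H f ((g, e) # w) = (if e then inv\<^bsub>H\<^esub> (f g) else f g) \<otimes>\<^bsub>H\<^esub> eval_word H f w"
  by (simp add: eval_word_def)

context group
begin

context
  fixes f :: "'g \<Rightarrow> 'a"
  assumes f: "range f \<subseteq> carrier G"
begin

lemma eval_word_closed [simp]: "eval_word G f w \<in> carrier G"
proof (induction w)
  case (Cons a w) then show ?case using f by (cases a) (auto simp: eval_word_Cons)
qed simp

lemma eval_word_append: "eval_word G f (u @ v) = eval_word G f u \<otimes> eval_word G f v"
proof (induction u)
  case (Cons a u)
  have "f g \<in> carrier G" for g using f by auto
  with Cons show ?case by (cases a) (auto simp: eval_word_Cons m_assoc)
qed simp

lemma eval_word_gen: "eval_word G f (gen g) = f g"
proof -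
  have "f g \<in> carrier G" using f by auto
  then show ?thesis by (simp add: gen_def eval_word_Cons)
qed

lemma eval_word_inv_word: "eval_word G f (inv_word w) = inv (eval_word G f w)"
proof (induction w)
  case Nil then show ?case by (simp add: inv_word_def)
next
  case (Cons a w)
  obtain g e where a: "a = (g, e)" by (cases a)
  have "f g \<in> carrier G" using f by auto
  with Cons show ?case
    by (auto simp: a inv_word_Cons eval_word_append eval_word_Cons inv_mult_group)
qed

lemma eval_word_pow_word: "eval_word G f (pow_word w n) = eval_word G f w [^] n"
proof (induction n)
  case (Suc n)
  have "pow_word w (Suc n) = pow_word w n @ w"
    by (simp add: pow_word_def replicate_append_same[symmetric])
  with Suc show ?case by (simp add: eval_word_append)
qed (simp add: pow_word_def)

lemma eval_word_rel_word_eq_one_iff: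
  "eval_word G f (rel_word u v) = \<one> \<longleftrightarrow> eval_word G f u = eval_word G f v"
  by (simp add: rel_word_def eval_word_append eval_word_inv_word inv_solve_right')

lemma eval_word_comm_word_eq_one_iff:
  "eval_word G f (comm_word u v) = \<one> \<longleftrightarrow>
     eval_word G f u \<otimes> eval_word G f v = eval_word G f v \<otimes> eval_word G f u"
proof -
  have "eval_word G f (comm_word u v) = eval_word G f (rel_word (u @ v) (v @ u))"
    by (simp add: comm_word_def rel_word_def inv_word_append)
  then show ?thesis by (simp add: eval_word_rel_word_eq_one_iff eval_word_append)
qed

lemma eval_word_hom:
  assumes h: "h \<in> hom G H" and "group H"
  shows "h (eval_word G f w) = eval_word H (h \<circ> f) w"
proof -
  interpret group_hom G H h
    using assms by (simp add: group_hom_def group_hom_axioms_def)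
  show ?thesis
  proof (induction w)
    case (Cons a w)
    have "f g \<in> carrier G" for g using f by auto
    with Cons show ?case by (cases a) (auto simp: eval_word_Cons)
  qed simp
qed

end

end

lemma eval_word_word_class:
  "eval_word (presented_group R) (\<lambda>g. word_class R (gen g)) w = word_class R w"
proof (induction w)
  case Nil then show ?case by (simp add: one_presented_group)
next
  case (Cons a w)
  interpret group "presented_group R" by (rule group_presented_group)
  obtain g e where a: "a = (g, e)" by (cases a)
  have "word_class R [(g, True)] = inv\<^bsub>presented_group R\<^esub> word_class R (gen g)"
    using word_class_eqI[OF pres_rel.cancel[of "[]" g True "[]" R]]
    by (intro inv_equality[symmetric])
      (auto simp: mult_presented_group one_presented_group carrier_presented_group gen_def)
  moreover have "word_class R ((g, e) # w) =
      word_class R [(g, e)] \<otimes>\<^bsub>presented_group R\<^esub> word_class R w"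
    by (simp add: mult_presented_group)
  ultimately show ?case using Cons by (cases e) (auto simp: a eval_word_Cons gen_def)
qed

definition satisfies_relators ::
    "('h, 'm) monoid_scheme \<Rightarrow> ('g \<Rightarrow> 'h) \<Rightarrow> 'g word set \<Rightarrow> bool" where
  "satisfies_relators H f R \<longleftrightarrow>
     range f \<subseteq> carrier H \<and> (\<forall>r \<in> R. eval_word H f r = \<one>\<^bsub>H\<^esub>)"

lemma satisfies_relators_range: "satisfies_relators H f R \<Longrightarrow> range f \<subseteq> carrier H"
  by (simp add: satisfies_relators_def)

lemma satisfies_relators_word_class:
  "satisfies_relators (presented_group R) (\<lambda>g. word_class R (gen g)) R"
  by (auto simp: satisfies_relators_def carrier_presented_group eval_word_word_class
      word_class_relator one_presented_group)

lemma (in group) eval_word_respects_pres_rel: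
  assumes "satisfies_relators G f R" and "(u, v) \<in> pres_rel R"
  shows "eval_word G f u = eval_word G f v"
  using assms(2)
proof (induction rule: pres_rel.induct)
  case (cancel u g e v)
  have f: "range f \<subseteq> carrier G"
    by (rule satisfies_relators_range[OF assms(1)])
  then have "f g \<in> carrier G" by auto
  with f have "eval_word G f ((g, e) # (g, \<not> e) # v) = eval_word G f v"
    by (cases e) (auto simp: eval_word_Cons m_assoc[symmetric])
  then show ?case by (simp add: eval_word_append[OF f, of u])
next
  case (relator r u v)
  then show ?case
    using assms(1) by (auto simp: satisfies_relators_def eval_word_append)
qed auto

definition induced_hom :: "('h, 'm) monoid_scheme \<Rightarrow> ('g \<Rightarrow> 'h) \<Rightarrow> 'g word set \<Rightarrow> 'h" where
  "induced_hom H f W = eval_word H f (SOME w. w \<in> W)"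

context
  fixes H :: "('h, 'm) monoid_scheme" and f :: "'g \<Rightarrow> 'h" and R :: "'g word set"
  assumes H: "group H" and f: "satisfies_relators H f R"
begin

lemma induced_hom_word_class: "induced_hom H f (word_class R w) = eval_word H f w"
proof -
  have "(SOME v. v \<in> word_class R w) \<in> word_class R w"
    by (rule someI[of _ w]) (simp add: mem_word_class_iff pres_rel.refl)
  then have "eval_word H f w = eval_word H f (SOME v. v \<in> word_class R w)"
    unfolding mem_word_class_iff by (rule group.eval_word_respects_pres_rel[OF H f])
  then show ?thesis by (simp add: induced_hom_def)
qed

lemma induced_hom_gen: "induced_hom H f (word_class R (gen g)) = f g"
  by (simp add: induced_hom_word_class group.eval_word_gen[OF H satisfies_relators_range[OF f]])

lemma induced_hom_hom: "induced_hom H f \<in> hom (presented_group R) H"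
  by (rule homI) (auto simp: carrier_presented_group mult_presented_group induced_hom_word_class
      group.eval_word_closed[OF H satisfies_relators_range[OF f]]
      group.eval_word_append[OF H satisfies_relators_range[OF f]])

end

lemma induced_hom_inverse:
  assumes f: "satisfies_relators (presented_group S) f R"
    and f': "satisfies_relators (presented_group R) f' S"
    and gens: "\<And>g. induced_hom (presented_group R) f' (f g) = word_class R (gen g)"
    and x: "x \<in> carrier (presented_group R)"
  shows "induced_hom (presented_group R) f' (induced_hom (presented_group S) f x) = x"
proof -
  obtain w where w: "x = word_class R w"
    using x by (auto simp: carrier_presented_group)
  have "induced_hom (presented_group R) f' (induced_hom (presented_group S) f x)
      = eval_word (presented_group R) (induced_hom (presented_group R) f' \<circ> f) w"
    unfolding w induced_hom_word_class[OF group_presented_group f]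
    by (intro group.eval_word_hom group_presented_group satisfies_relators_range[OF f]
        induced_hom_hom[OF group_presented_group f'])
  also have "\<dots> = x"
    unfolding w comp_def gens by (rule eval_word_word_class)
  finally show ?thesis .
qed

lemma induced_hom_iso:
  assumes f: "satisfies_relators (presented_group S) f R"
    and f': "satisfies_relators (presented_group R) f' S"
    and "\<And>g. induced_hom (presented_group R) f' (f g) = word_class R (gen g)"
    and "\<And>h. induced_hom (presented_group S) f (f' h) = word_class S (gen h)"
  shows "induced_hom (presented_group S) f \<in> iso (presented_group R) (presented_group S)"
proof -
  have hom: "induced_hom (presented_group S) f \<in> hom (presented_group R) (presented_group S)"
    and hom': "induced_hom (presented_group R) f' \<in> hom (presented_group S) (presented_group R)"
    using induced_hom_hom group_presented_group f f' by blast+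
  have "bij_betw (induced_hom (presented_group S) f)
      (carrier (presented_group R)) (carrier (presented_group S))"
    using induced_hom_inverse[OF f f'] induced_hom_inverse[OF f' f] assms(3,4)
    by (intro bij_betw_byWitness[where f' = "induced_hom (presented_group R) f'"])
      (use hom hom' in \<open>auto simp: hom_def\<close>)
  with hom show ?thesis by (simp add: iso_def)
qed

lemma (in monoid) nat_pow_two: "x \<in> carrier G \<Longrightarrow> x [^] (2::nat) = x \<otimes> x"
  by (simp add: numeral_2_eq_2)

context group
begin

lemma nat_pow_mod:
  assumes "a \<in> carrier G" and "a [^] (m::nat) = \<one>"
  shows "a [^] (n::nat) = a [^] (n mod m)"
proof -
  have "a [^] n = a [^] (m * (n div m) + n mod m)" by simp
  also have "\<dots> = (a [^] m) [^] (n div m) \<otimes> a [^] (n mod m)"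
    using assms(1) by (simp add: nat_pow_mult nat_pow_pow)
  finally show ?thesis using assms by simp
qed

lemma involution_conj_nat_pow:
  assumes x: "x \<in> carrier G" and y: "y \<in> carrier G" and xx: "x \<otimes> x = \<one>"
  shows "x \<otimes> (y [^] (n::nat) \<otimes> x) = (x \<otimes> (y \<otimes> x)) [^] n"
proof (induction n)
  case (Suc n)
  have "\<And>z. z \<in> carrier G \<Longrightarrow> x \<otimes> (x \<otimes> z) = z"
    using xx x by (simp add: m_assoc[symmetric])
  then have "x \<otimes> (y [^] Suc n \<otimes> x) = (x \<otimes> (y [^] n \<otimes> x)) \<otimes> (x \<otimes> (y \<otimes> x))"
    using x y by (simp add: m_assoc)
  with Suc show ?case by simp
qed (use x xx in simp)

lemma G_relation_consequences:
  assumes w: "w \<in> carrier G" and x: "x \<in> carrier G" and xx: "x \<otimes> x = \<one>"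
    and rel: "w [^] (2::nat) = x \<otimes> (w [^] (5::nat) \<otimes> x)"
  shows "w [^] (21::nat) = \<one>"
    and "x \<otimes> (w [^] (15::nat) \<otimes> x) = w [^] (6::nat)"
    and "w [^] (7::nat) \<otimes> x = x \<otimes> w [^] (7::nat)"
proof -
  define v where "v = x \<otimes> (w \<otimes> x)"
  have v: "v \<in> carrier G" using v_def w x by simp
  have conj: "x \<otimes> (w [^] n \<otimes> x) = v [^] n" for n :: nat
    unfolding v_def by (rule involution_conj_nat_pow[OF x w xx])
  have v5: "v [^] (5::nat) = w [^] (2::nat)" using rel conj by simp
  have "v [^] (2::nat) = x \<otimes> ((x \<otimes> (w [^] (5::nat) \<otimes> x)) \<otimes> x)"
    using conj[of 2] by (simp add: rel)
  also have "\<dots> = (x \<otimes> x) \<otimes> w [^] (5::nat) \<otimes> (x \<otimes> x)"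
    using x w by (simp add: m_assoc)
  also have "\<dots> = w [^] (5::nat)"
    using w xx by simp
  finally have v2: "v [^] (2::nat) = w [^] (5::nat)" .
  have "w [^] (21::nat) \<otimes> w [^] (4::nat) = (v [^] (2::nat)) [^] (5::nat)"
    using w by (simp add: v2 nat_pow_mult nat_pow_pow)
  also have "\<dots> = (v [^] (5::nat)) [^] (2::nat)"
    using v by (simp add: nat_pow_pow)
  also have "\<dots> = w [^] (4::nat)"
    using w by (simp add: v5 nat_pow_pow)
  finally show "w [^] (21::nat) = \<one>"
    using w by simp
  have "x \<otimes> (w [^] (15::nat) \<otimes> x) = (v [^] (5::nat)) [^] (3::nat)"
    using v by (simp add: conj nat_pow_pow)
  then show "x \<otimes> (w [^] (15::nat) \<otimes> x) = w [^] (6::nat)"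
    using w by (simp add: v5 nat_pow_pow)
  have "x \<otimes> (w [^] (7::nat) \<otimes> x) = v [^] (5::nat) \<otimes> v [^] (2::nat)"
    using v by (simp add: conj nat_pow_mult)
  then have conj7: "x \<otimes> (w [^] (7::nat) \<otimes> x) = w [^] (7::nat)"
    using w by (simp add: v5 v2 nat_pow_mult)
  have "w [^] (7::nat) \<otimes> x = (x \<otimes> (w [^] (7::nat) \<otimes> x)) \<otimes> x"
    by (simp add: conj7)
  also have "\<dots> = x \<otimes> w [^] (7::nat) \<otimes> (x \<otimes> x)"
    using w x by (simp add: m_assoc)
  finally show "w [^] (7::nat) \<otimes> x = x \<otimes> w [^] (7::nat)"
    using w x xx by simp
qed

lemma D_relation_consequences:
  assumes a: "a \<in> carrier G" and b: "b \<in> carrier G" and x: "x \<in> carrier G"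
    and xx: "x \<otimes> x = \<one>" and a3: "a [^] (3::nat) = \<one>" and b7: "b [^] (7::nat) = \<one>"
    and xbx: "x \<otimes> (b \<otimes> x) = b [^] (6::nat)" and ab: "a \<otimes> b = b \<otimes> a" and ax: "a \<otimes> x = x \<otimes> a"
  shows "(a \<otimes> b) [^] (2::nat) = x \<otimes> ((a \<otimes> b) [^] (5::nat) \<otimes> x)"
    and "(a \<otimes> b) [^] (7::nat) = a"
    and "(a \<otimes> b) [^] (15::nat) = b"
proof -
  have ab_pow: "(a \<otimes> b) [^] n = a [^] n \<otimes> b [^] n" for n :: nat
    by (rule pow_mult_distrib[OF ab a b])
  have a_mod: "a [^] n = a [^] (n mod 3)" for n :: nat by (rule nat_pow_mod[OF a a3])
  have b_mod: "b [^] n = b [^] (n mod 7)" for n :: nat by (rule nat_pow_mod[OF b b7])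
  have "x \<otimes> ((a \<otimes> b) [^] (5::nat) \<otimes> x) = a [^] (5::nat) \<otimes> (x \<otimes> (b [^] (5::nat) \<otimes> x))"
    using a b x group_commutes_pow[OF ax a x]
    by (simp add: ab_pow m_assoc[symmetric])
  also have "x \<otimes> (b [^] (5::nat) \<otimes> x) = b [^] (30::nat)"
    using b by (simp add: involution_conj_nat_pow[OF x b xx] xbx nat_pow_pow)
  finally show "(a \<otimes> b) [^] (2::nat) = x \<otimes> ((a \<otimes> b) [^] (5::nat) \<otimes> x)"
    by (simp add: ab_pow a_mod[of 5] b_mod[of 30])
  show "(a \<otimes> b) [^] (7::nat) = a" using a b by (simp add: ab_pow a_mod[of 7] b_mod[of 7])
  show "(a \<otimes> b) [^] (15::nat) = b" using a b by (simp add: ab_pow a_mod[of 15] b_mod[of 15])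
qed

end

lemma (in group) satisfies_relG_iff:
  "satisfies_relators G f relG \<longleftrightarrow> range f \<subseteq> carrier G \<and> f Xi \<otimes> f Xi = \<one> \<and>
     f Om [^] (2::nat) = f Xi \<otimes> (f Om [^] (5::nat) \<otimes> f Xi)"
proof (cases "range f \<subseteq> carrier G")
  case True
  then have "f g \<in> carrier G" for g by auto
  with True show ?thesis
    by (auto simp: satisfies_relators_def relG_def eval_word_rel_word_eq_one_iff
        eval_word_append eval_word_pow_word eval_word_gen nat_pow_two)
qed (simp add: satisfies_relators_def)

lemma (in group) satisfies_relD_iff:
  "satisfies_relators G f relD \<longleftrightarrow> range f \<subseteq> carrier G \<and>
     f X \<otimes> f X = \<one> \<and> f A [^] (3::nat) = \<one> \<and> f B [^] (7::nat) = \<one> \<and>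
     f X \<otimes> (f B \<otimes> f X) = f B [^] (6::nat) \<and>
     f A \<otimes> f B = f B \<otimes> f A \<and> f A \<otimes> f X = f X \<otimes> f A"
proof (cases "range f \<subseteq> carrier G")
  case True
  then have "f g \<in> carrier G" for g by auto
  with True show ?thesis
    by (auto simp: satisfies_relators_def relD_def eval_word_rel_word_eq_one_iff
        eval_word_comm_word_eq_one_iff eval_word_append eval_word_pow_word eval_word_gen
        nat_pow_two)
qed (simp add: satisfies_relators_def)

interpretation G_grp: group G_grp by (rule group_presented_group)
interpretation D_grp: group D_grp by (rule group_presented_group)

abbreviation G_omega :: "genG word set" where "G_omega \<equiv> word_class relG (gen Om)"
abbreviation G_xi :: "genG word set" where "G_xi \<equiv> word_class relG (gen Xi)"
abbreviation D_a :: "genD word set" where "D_a \<equiv> word_class relD (gen A)"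
abbreviation D_b :: "genD word set" where "D_b \<equiv> word_class relD (gen B)"
abbreviation D_xi :: "genD word set" where "D_xi \<equiv> word_class relD (gen X)"

lemma G_grp_defining_relations:
  "G_xi \<otimes>\<^bsub>G_grp\<^esub> G_xi = \<one>\<^bsub>G_grp\<^esub>"
  "G_omega [^]\<^bsub>G_grp\<^esub> (2::nat)
     = G_xi \<otimes>\<^bsub>G_grp\<^esub> (G_omega [^]\<^bsub>G_grp\<^esub> (5::nat) \<otimes>\<^bsub>G_grp\<^esub> G_xi)"
  using satisfies_relators_word_class[of relG] by (simp_all add: G_grp.satisfies_relG_iff)

lemma D_grp_defining_relations:
  "D_xi \<otimes>\<^bsub>D_grp\<^esub> D_xi = \<one>\<^bsub>D_grp\<^esub>"
  "D_a [^]\<^bsub>D_grp\<^esub> (3::nat) = \<one>\<^bsub>D_grp\<^esub>"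
  "D_b [^]\<^bsub>D_grp\<^esub> (7::nat) = \<one>\<^bsub>D_grp\<^esub>"
  "D_xi \<otimes>\<^bsub>D_grp\<^esub> (D_b \<otimes>\<^bsub>D_grp\<^esub> D_xi) = D_b [^]\<^bsub>D_grp\<^esub> (6::nat)"
  "D_a \<otimes>\<^bsub>D_grp\<^esub> D_b = D_b \<otimes>\<^bsub>D_grp\<^esub> D_a"
  "D_a \<otimes>\<^bsub>D_grp\<^esub> D_xi = D_xi \<otimes>\<^bsub>D_grp\<^esub> D_a"
  using satisfies_relators_word_class[of relD] by (simp_all add: D_grp.satisfies_relD_iff)

lemmas G_grp_relations = G_grp.G_relation_consequences
  [OF word_class_closed word_class_closed G_grp_defining_relations]

lemmas D_grp_relations = D_grp.D_relation_consequences
  [OF word_class_closed word_class_closed word_class_closed D_grp_defining_relations]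

definition phi_gen :: "genG \<Rightarrow> genD word set" where
  "phi_gen g = (case g of Om \<Rightarrow> D_a \<otimes>\<^bsub>D_grp\<^esub> D_b | Xi \<Rightarrow> D_xi)"

text \<open>\<open>\<omega>\<^sup>7\<close> and \<open>\<omega>\<^sup>1\<^sup>5\<close> are the components of \<open>\<omega>\<close> of order 3 and 7:
  \<open>7 \<equiv> 1, 15 \<equiv> 0 (mod 3)\<close> and \<open>7 \<equiv> 0, 15 \<equiv> 1 (mod 7)\<close>.\<close>
definition psi_gen :: "genD \<Rightarrow> genG word set" where
  "psi_gen g = (case g of
     A \<Rightarrow> G_omega [^]\<^bsub>G_grp\<^esub> (7::nat) | B \<Rightarrow> G_omega [^]\<^bsub>G_grp\<^esub> (15::nat) | X \<Rightarrow> G_xi)"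

lemma satisfies_relators_phi_gen: "satisfies_relators D_grp phi_gen relG"
proof -
  have "range phi_gen \<subseteq> carrier D_grp"
    by (auto simp: phi_gen_def word_class_closed split: genG.split)
  then show ?thesis
    using D_grp_relations(1) D_grp_defining_relations(1)
    by (simp add: D_grp.satisfies_relG_iff phi_gen_def)
qed

lemma satisfies_relators_psi_gen: "satisfies_relators G_grp psi_gen relD"
proof -
  have omega_mod: "G_omega [^]\<^bsub>G_grp\<^esub> n = G_omega [^]\<^bsub>G_grp\<^esub> (n mod 21)" for n :: nat
    by (rule G_grp.nat_pow_mod[OF word_class_closed G_grp_relations(1)])
  have "range psi_gen \<subseteq> carrier G_grp"
    by (auto simp: psi_gen_def word_class_closed split: genD.split)
  moreover have "(G_omega [^]\<^bsub>G_grp\<^esub> (7::nat)) [^]\<^bsub>G_grp\<^esub> (3::nat) = \<one>\<^bsub>G_grp\<^esub>"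
    using G_grp_relations(1) by (simp add: G_grp.nat_pow_pow word_class_closed)
  moreover have "(G_omega [^]\<^bsub>G_grp\<^esub> (15::nat)) [^]\<^bsub>G_grp\<^esub> (7::nat) = \<one>\<^bsub>G_grp\<^esub>"
    using omega_mod[of 105] by (simp add: G_grp.nat_pow_pow word_class_closed)
  moreover have "(G_omega [^]\<^bsub>G_grp\<^esub> (15::nat)) [^]\<^bsub>G_grp\<^esub> (6::nat)
      = G_omega [^]\<^bsub>G_grp\<^esub> (6::nat)"
    using omega_mod[of 90] by (simp add: G_grp.nat_pow_pow word_class_closed)
  ultimately show ?thesis
    using G_grp_relations(2,3) G_grp_defining_relations(1)
      G_grp.nat_pow_comm[OF word_class_closed]
    by (simp add: G_grp.satisfies_relD_iff psi_gen_def)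
qed

lemma induced_hom_psi_phi_gen:
  "induced_hom G_grp psi_gen (phi_gen g) = word_class relG (gen g)"
proof -
  have "G_omega [^]\<^bsub>G_grp\<^esub> (7::nat) \<otimes>\<^bsub>G_grp\<^esub> G_omega [^]\<^bsub>G_grp\<^esub> (15::nat) = G_omega"
    using G_grp.nat_pow_mod[OF word_class_closed G_grp_relations(1), of 22]
    by (simp add: G_grp.nat_pow_mult word_class_closed)
  then show ?thesis
    by (cases g) (simp_all add: phi_gen_def psi_gen_def word_class_closed
        hom_mult[OF induced_hom_hom[OF group_presented_group satisfies_relators_psi_gen]]
        induced_hom_gen[OF group_presented_group satisfies_relators_psi_gen])
qed

lemma induced_hom_phi_psi_gen:
  "induced_hom D_grp phi_gen (psi_gen g) = word_class relD (gen g)"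
  using D_grp_relations(2,3)
  by (cases g) (simp_all add: psi_gen_def phi_gen_def word_class_closed
      hom_nat_pow[OF induced_hom_hom[OF group_presented_group satisfies_relators_phi_gen]
        word_class_closed group_presented_group group_presented_group]
      induced_hom_gen[OF group_presented_group satisfies_relators_phi_gen])

theorem lemma3p2:
  shows "\<exists>\<phi>. \<phi> \<in> iso G_grp D_grp
            \<and> \<phi> (word_class relG (gen Xi)) = word_class relD (gen X)
            \<and> \<phi> (word_class relG (gen Om))
                = word_class relD (gen A) \<otimes>\<^bsub>D_grp\<^esub> word_class relD (gen B)"
proof (intro exI conjI)
  show "induced_hom D_grp phi_gen \<in> iso G_grp D_grp"
    using satisfies_relators_phi_gen satisfies_relators_psi_gen
      induced_hom_psi_phi_gen induced_hom_phi_psi_gen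
    by (rule induced_hom_iso)
  show "induced_hom D_grp phi_gen G_xi = D_xi"
    and "induced_hom D_grp phi_gen G_omega = D_a \<otimes>\<^bsub>D_grp\<^esub> D_b"
    by (simp_all add: induced_hom_gen[OF group_presented_group satisfies_relators_phi_gen]
        phi_gen_def)
qed

end
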